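(* In the setting and notation described in the context, assume (A5) and (A6). Then for every $\gamma_0$ with $0<\gamma_0<\tilde\gamma_0=(1-\gamma_{10})/2$, as $n\to\infty$, $$P\left(\{\Delta_{p_0,n}\le n^{-\gamma_0}\}\cap\{\Delta_{2,n}\le n^{-\gamma_0}\}\cap\{\Delta_{p_0+1,n}\le n^{-\gamma_0}\}\cap\{\Delta_{p_0+M-1,n}\le n^{-\gamma_0}\}\right)\to1.$$
   Context: Setting. $n=1,2,\ldots$ indexes a sequence of problems; for each $n$: an integer $p=p_n$, fixed integers $p_0,M$ (independent of $n$) with $1\le p_0\le M$, $p_0<p$; a continuous $f_n:[0,1]^p\to\mathbb{R}$; design points $\mathbf{x}_i=(x_{i1},\ldots,x_{ip})'$, $i=1,\ldots,n$, forming the rows of the $n\times p$ matrix $\mathbf{X}$. $Z_d=\{1,\ldots,d\}$, $\mathcal{A}_0=Z_{p_0}$; $\mathbf{x}_{\mathcal{A}}$, $\mathbf{X}_{\mathcal{A}}$ are the subvector/column-submatrix indexed by $\mathcal{A}\subset Z_p$. $a_n=O(n^\gamma)$ means $|a_n|\le cn^\gamma$ for a constant $c$ and large $n$. Discrepancy: for an $m\times d$ matrix $\mathbf{A}$ with rows $\mathbf{a}_i'\in[0,1]^d$, $\delta_{d,m}(\mathbf{A})=\sup_{\mathbf{x}\in[0,1]^d}|F_m(\mathbf{x})-\prod_kx_k|$, $F_m(\mathbf{x})=\frac1m\#\{i:a_{ik}\le x_k\ \forall k\}$. Sets: $\mathcal{U}_1=\{\mathcal{A}\subset Z_p:|\mathcal{A}|=M,\mathcal{A}_0\setminus\mathcal{A}\ne\emptyset\}$,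 $\mathcal{U}_2=\{\mathcal{A}\subset Z_p:|\mathcal{A}|=2\}$, $\mathcal{U}_3=\{\mathcal{A}_0\cup I_1:I_1\subset Z_p\setminus\mathcal{A}_0,|I_1|=1\}$, $\mathcal{U}_4=\{\mathcal{A}_0\cup I_2:I_2\subset Z_p\setminus\mathcal{A}_0,|I_2|=M-1\}$. $\Delta_{p_0,n}=\delta_{p_0,n}(\mathbf{X}_{\mathcal{A}_0})$, $\Delta_{2,n}=\max_{\mathcal{A}\in\mathcal{U}_2}\delta_{2,n}(\mathbf{X}_{\mathcal{A}})$, $\Delta_{p_0+1,n}=\max_{\mathcal{A}\in\mathcal{U}_3}\delta_{p_0+1,n}(\mathbf{X}_{\mathcal{A}})$, $\Delta_{p_0+M-1,n}=\max_{\mathcal{A}\in\mathcal{U}_4}\delta_{p_0+M-1,n}(\mathbf{X}_{\mathcal{A}})$. Also given for each $n$: $\widetilde f_n\in C[0,1]^{p_0}$ and $\eta_n>0$. Subset best linear approximation: $(\beta_0(\mathcal{A}),\boldsymbol\beta(\mathcal{A})')'$ minimizes $\int_{[0,1]^p}[f_n(\mathbf{x})-\phi_0-\boldsymbol\phi'\mathbf{x}_{\mathcal{A}}]^2d\mathbf{x}$; $\boldsymbol\beta_{Z_p}(\mathcal{A})\in\mathbb{R}^p$ equals $\boldsymbol\beta(\mathcal{A})$ on $\mathcal{A}$ and $0$ elsewhere. Hardy–Krause variation $V_{HK}$: for $g:[0,1]^d\to\mathbb{R}$, $V_{HK}(g)=\sum_{\emptyset\ne u\subset Z_d}V^{Vit}(g_u)$,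 where $g_u$ is $g$ with $x_k=1$ for $k\notin u$ and $V^{Vit}$ is the Vitali variation (supremum over finite partitions into axis-parallel sub-rectangles $J$ of $\sum|\Delta_J|$, $\Delta_J$ the alternating-sign vertex sum); functions of some coordinates of $\mathbf{x}\in[0,1]^p$ are regarded as functions on $[0,1]^p$. $C_{1n}=\max_{j\le p}\max(V_{HK}(\widetilde f_n),V_{HK}(x_j\widetilde f_n))$; $C_{2n}=\max_{\mathbf{x}}|f_n(\mathbf{x})|$; $C_{3n}=\max_{\mathbf{x}}|\widetilde f_n(\mathbf{x}_{\mathcal{A}_0})-\mathbf{x}'\boldsymbol\beta_{Z_p}(\mathcal{A}_0)-\beta_0(\mathcal{A}_0)|$; $C_{4n}=\max_{\mathcal{A}\in\mathcal{U}_1}\max_{\mathbf{x}}|\widetilde f_n(\mathbf{x}_{\mathcal{A}_0})-\mathbf{x}'\boldsymbol\beta_{Z_p}(\mathcal{A})-\beta_0(\mathcal{A})|$; $V_{1n}=V_{HK}(\widetilde f_n(\mathbf{x}_{\mathcal{A}_0})-\beta_0(\mathcal{A}_0)-\mathbf{x}'\boldsymbol\beta_{Z_p}(\mathcal{A}_0))$; $V_{2n}=\max_{\mathcal{A}\in\mathcal{U}_1}V_{HK}(\widetilde f_n(\mathbf{x}_{\mathcal{A}_0})-\beta_0(\mathcal{A})-\mathbf{x}'\boldsymbol\beta_{Z_p}(\mathcal{A}))$ (maxima over $\mathbf{x}\in[0,1]^p$). (A5): the entries $x_{ij}$ are i.i.d. uniform on $[0,1)$. (A6): $\eta_n=O(n^{-\gamma_1})$,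 $V_{1n}=O(n^{\gamma_2})$, $V_{2n}=O(n^{\gamma_3})$, $C_{1n}=O(n^{\gamma_4})$, $C_{2n}=O(n^{\gamma_5})$, $C_{3n}=O(n^{\gamma_6})$, $C_{4n}=O(n^{\gamma_7})$, $\log p=O(n^{\gamma_{10}})$, where $\gamma_1,\gamma_{10}>0$, $\gamma_{10}<1$, and with $\tilde\gamma_0=(1-\gamma_{10})/2$: $\gamma_2,\gamma_3,\gamma_4,\gamma_5<\tilde\gamma_0$, $\gamma_6,\gamma_7<\gamma_1$, $\gamma_4+\gamma_6<\tilde\gamma_0$, $\gamma_5+\gamma_6<\tilde\gamma_0$, $\gamma_4+\gamma_7<\tilde\gamma_0$, $\gamma_5+\gamma_7<\tilde\gamma_0$. *)

theory Defs
  imports "HOL-Probability.Probability"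
begin

text \<open>Points of [0,1]^d are extensional functions on the index set {1..d}
  (the PiM / PiE convention); coordinate k of x is x k.\<close>

definition cube :: "nat \<Rightarrow> (nat \<Rightarrow> real) set" where
  "cube d = PiE {1..d} (\<lambda>_. {0..1})"

definition unif_cube :: "nat \<Rightarrow> (nat \<Rightarrow> real) measure" where
  "unif_cube d = PiM {1..d} (\<lambda>_. uniform_measure lborel {0..1::real})"

definition max_over :: "'i set \<Rightarrow> ('i \<Rightarrow> 'b::{linorder,zero}) \<Rightarrow> 'b" where
  "max_over U h = (if U = {} then 0 else Max (h ` U))"

text \<open>Discrepancy delta_{|A|,m}(X_A) of the column submatrix of the m x p matrix Xm
  (entries Xm i k, rows i = 1..m) indexed by A.\<close>
definition disc :: "nat \<Rightarrow> (nat \<Rightarrow> nat \<Rightarrow> real) \<Rightarrow> nat set \<Rightarrow> real" where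
  "disc m Xm A = Sup ((\<lambda>x. \<bar>real (card {i \<in> {1..m}. \<forall>k\<in>A. Xm i k \<le> x k}) / real m
                          - (\<Prod>k\<in>A. x k)\<bar>) ` PiE A (\<lambda>_. {0..1}))"

definition U1 :: "nat \<Rightarrow> nat \<Rightarrow> nat \<Rightarrow> nat set set" where
  "U1 p p0 M = {A. A \<subseteq> {1..p} \<and> card A = M \<and> \<not> {1..p0} \<subseteq> A}"
definition U2 :: "nat \<Rightarrow> nat set set" where
  "U2 p = {A. A \<subseteq> {1..p} \<and> card A = 2}"
definition U3 :: "nat \<Rightarrow> nat \<Rightarrow> nat set set" where
  "U3 p p0 = {{1..p0} \<union> I1 | I1. I1 \<subseteq> {1..p} - {1..p0} \<and> card I1 = 1}"
definition U4 :: "nat \<Rightarrow> nat \<Rightarrow> nat \<Rightarrow> nat set set" where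
  "U4 p p0 M = {{1..p0} \<union> I2 | I2. I2 \<subseteq> {1..p} - {1..p0} \<and> card I2 = M - 1}"

text \<open>Subset best linear approximation: a pair (beta_0(A), beta_{Z_p}(A)) where the
  coefficient vector vanishes outside A, minimising the L2([0,1]^p) error.\<close>
definition lin_obj :: "nat \<Rightarrow> ((nat \<Rightarrow> real) \<Rightarrow> real) \<Rightarrow> real \<Rightarrow> (nat \<Rightarrow> real) \<Rightarrow> real" where
  "lin_obj p f \<phi>0 \<phi> = (\<integral>x. (f x - \<phi>0 - (\<Sum>k\<in>{1..p}. \<phi> k * x k))\<^sup>2 \<partial>unif_cube p)"

definition best_lin :: "nat \<Rightarrow> ((nat \<Rightarrow> real) \<Rightarrow> real) \<Rightarrow> nat set \<Rightarrow> real \<times> (nat \<Rightarrow> real)" where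
  "best_lin p f A = (SOME (b0, b). (\<forall>k. k \<notin> A \<longrightarrow> b k = 0) \<and>
      (\<forall>\<phi>0 \<phi>. (\<forall>k. k \<notin> A \<longrightarrow> \<phi> k = 0) \<longrightarrow> lin_obj p f b0 b \<le> lin_obj p f \<phi>0 \<phi>))"

text \<open>Hardy--Krause variation on [0,1]^p.  For a nonempty u, g_u fixes x_k = 1 for k not in u;
  the Vitali variation of g_u is the supremum over grid partitions of [0,1]^u
  (for each k in u a strictly increasing list 0 = t k 0 < ... < t k (m k) = 1).\<close>
definition vertex :: "nat \<Rightarrow> nat set \<Rightarrow> (nat \<Rightarrow> real) \<Rightarrow> (nat \<Rightarrow> real) \<Rightarrow> nat set \<Rightarrow> nat \<Rightarrow> real" where
  "vertex p u a b v = (\<lambda>k\<in>{1..p}. if k \<in> v then b k else if k \<in> u then a k else 1)"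

definition vit_delta :: "nat \<Rightarrow> ((nat \<Rightarrow> real) \<Rightarrow> real) \<Rightarrow> nat set \<Rightarrow> (nat \<Rightarrow> real) \<Rightarrow> (nat \<Rightarrow> real) \<Rightarrow> real" where
  "vit_delta p g u a b = (\<Sum>v\<in>Pow u. (-1) ^ card (u - v) * g (vertex p u a b v))"

definition valid_grid :: "nat set \<Rightarrow> (nat \<Rightarrow> nat) \<Rightarrow> (nat \<Rightarrow> nat \<Rightarrow> real) \<Rightarrow> bool" where
  "valid_grid u m t = (\<forall>k\<in>u. 0 < m k \<and> t k 0 = 0 \<and> t k (m k) = 1 \<and> (\<forall>i<m k. t k i < t k (Suc i)))"

definition vitali :: "nat \<Rightarrow> ((nat \<Rightarrow> real) \<Rightarrow> real) \<Rightarrow> nat set \<Rightarrow> ereal" where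
  "vitali p g u = (SUP mt \<in> {(m, t). valid_grid u m t}.
      ereal (\<Sum>j\<in>PiE u (\<lambda>k. {..<fst mt k}).
         \<bar>vit_delta p g u (\<lambda>k. snd mt k (j k)) (\<lambda>k. snd mt k (Suc (j k)))\<bar>))"

definition V_HK :: "nat \<Rightarrow> ((nat \<Rightarrow> real) \<Rightarrow> real) \<Rightarrow> ereal" where
  "V_HK p g = (\<Sum>u\<in>{u. u \<subseteq> {1..p} \<and> u \<noteq> {}}. vitali p g u)"

definition resid :: "nat \<Rightarrow> nat \<Rightarrow> ((nat \<Rightarrow> real) \<Rightarrow> real) \<Rightarrow> ((nat \<Rightarrow> real) \<Rightarrow> real)
     \<Rightarrow> nat set \<Rightarrow> (nat \<Rightarrow> real) \<Rightarrow> real" where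
  "resid p p0 f ft A x = ft (restrict x {1..p0}) - fst (best_lin p f A)
      - (\<Sum>k\<in>{1..p}. x k * snd (best_lin p f A) k)"

definition C1 :: "nat \<Rightarrow> nat \<Rightarrow> ((nat \<Rightarrow> real) \<Rightarrow> real) \<Rightarrow> ereal" where
  "C1 p p0 ft = max_over {1..p} (\<lambda>j. max (V_HK p (\<lambda>x. ft (restrict x {1..p0})))
                                         (V_HK p (\<lambda>x. x j * ft (restrict x {1..p0}))))"
definition C2 :: "nat \<Rightarrow> ((nat \<Rightarrow> real) \<Rightarrow> real) \<Rightarrow> real" where
  "C2 p f = Sup ((\<lambda>x. \<bar>f x\<bar>) ` cube p)"
definition C3 :: "nat \<Rightarrow> nat \<Rightarrow> ((nat \<Rightarrow> real) \<Rightarrow> real) \<Rightarrow> ((nat \<Rightarrow> real) \<Rightarrow> real) \<Rightarrow> real" where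
  "C3 p p0 f ft = Sup ((\<lambda>x. \<bar>resid p p0 f ft {1..p0} x\<bar>) ` cube p)"
definition C4 :: "nat \<Rightarrow> nat \<Rightarrow> nat \<Rightarrow> ((nat \<Rightarrow> real) \<Rightarrow> real) \<Rightarrow> ((nat \<Rightarrow> real) \<Rightarrow> real) \<Rightarrow> real" where
  "C4 p p0 M f ft = max_over (U1 p p0 M) (\<lambda>A. Sup ((\<lambda>x. \<bar>resid p p0 f ft A x\<bar>) ` cube p))"
definition V1 :: "nat \<Rightarrow> nat \<Rightarrow> ((nat \<Rightarrow> real) \<Rightarrow> real) \<Rightarrow> ((nat \<Rightarrow> real) \<Rightarrow> real) \<Rightarrow> ereal" where
  "V1 p p0 f ft = V_HK p (resid p p0 f ft {1..p0})"
definition V2 :: "nat \<Rightarrow> nat \<Rightarrow> nat \<Rightarrow> ((nat \<Rightarrow> real) \<Rightarrow> real) \<Rightarrow> ((nat \<Rightarrow> real) \<Rightarrow> real) \<Rightarrow> ereal" where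
  "V2 p p0 M f ft = max_over (U1 p p0 M) (\<lambda>A. V_HK p (resid p p0 f ft A))"

definition bigO_pow :: "(nat \<Rightarrow> real) \<Rightarrow> real \<Rightarrow> bool" where
  "bigO_pow a \<gamma> = (\<exists>c. \<forall>\<^sub>F n in sequentially. \<bar>a n\<bar> \<le> c * real n powr \<gamma>)"
definition bigO_pow_e :: "(nat \<Rightarrow> ereal) \<Rightarrow> real \<Rightarrow> bool" where
  "bigO_pow_e a \<gamma> = (\<exists>c. \<forall>\<^sub>F n in sequentially. \<bar>a n\<bar> \<le> ereal (c * real n powr \<gamma>))"

end

(*
  For a fixed column set A and a fixed point g of the unit cube, the empirical distribution
  function of the rows at g is a mean of n independent Bernoulli variables with mean prod g, so
  Hoeffding's inequality bounds the probability of a deviation t by 2 exp (-2 n t^2).  Both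
  distribution functions are monotone, and the uniform one moves by at most |A|/K between
  neighbouring points of the grid of mesh 1/K; hence the discrepancy exceeds s only if the
  deviation exceeds s/2 at one of the (K+1)^|A| grid points, for K of order 1/s.  All column sets
  in question have at most D = p0 + M elements and there are at most (D+1) p^D of them, so a union
  bound with s = n^-gamma0 and K ~ n^gamma0 leaves a failure probability of order
  exp (O(n^gamma10) + O(log n) - n^(1 - 2 gamma0)/2), which tends to 0 because gamma10 < 1 - 2 gamma0.
  Of the hypotheses (A6) only the growth bound on log p enters.
*)
theory Submission
  imports Defs "HOL-Real_Asymp.Real_Asymp"
begin

definition emp_cdf :: "nat \<Rightarrow> (nat \<Rightarrow> nat \<Rightarrow> real) \<Rightarrow> nat set \<Rightarrow> (nat \<Rightarrow> real) \<Rightarrow> real" where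
  "emp_cdf m Xm A x = real (card {i \<in> {1..m}. \<forall>k\<in>A. Xm i k \<le> x k}) / real m"

definition grid :: "nat \<Rightarrow> nat set \<Rightarrow> (nat \<Rightarrow> real) set" where
  "grid K A = PiE A (\<lambda>_. (\<lambda>j. real j / real K) ` {0..K})"

definition grid_disc :: "nat \<Rightarrow> (nat \<Rightarrow> nat \<Rightarrow> real) \<Rightarrow> nat set \<Rightarrow> nat \<Rightarrow> real" where
  "grid_disc m Xm A K = Max ((\<lambda>x. \<bar>emp_cdf m Xm A x - (\<Prod>k\<in>A. x k)\<bar>) ` grid K A)"

lemma disc_eq_SUP_emp_cdf:
  "disc m Xm A = (SUP x\<in>PiE A (\<lambda>_. {0..1}). \<bar>emp_cdf m Xm A x - (\<Prod>k\<in>A. x k)\<bar>)"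
  unfolding disc_def emp_cdf_def ..

lemma finite_grid: "finite A \<Longrightarrow> finite (grid K A)"
  unfolding grid_def by (intro finite_PiE) auto

lemma grid_nonempty: "grid K A \<noteq> {}"
  unfolding grid_def by (simp add: PiE_eq_empty_iff)

lemma grid_subset_cube: "grid K A \<subseteq> PiE A (\<lambda>_. {0..1})"
  unfolding grid_def by (auto simp: PiE_def Pi_def divide_le_eq_1)

lemma card_grid_le: "finite A \<Longrightarrow> card (grid K A) \<le> (K + 1) ^ card A"
proof -
  assume A: "finite A"
  have "card (grid K A) = (\<Prod>k\<in>A. card ((\<lambda>j. real j / real K) ` {0..K}))"
    unfolding grid_def by (rule card_PiE[OF A])
  also have "\<dots> \<le> (\<Prod>k\<in>A. K + 1)"
    by (intro prod_mono) (auto intro: order.trans[OF card_image_le])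
  finally show ?thesis by simp
qed

lemma emp_cdf_mono: "(\<And>k. k \<in> A \<Longrightarrow> y k \<le> z k) \<Longrightarrow> emp_cdf m Xm A y \<le> emp_cdf m Xm A z"
  unfolding emp_cdf_def
  by (intro divide_right_mono of_nat_mono card_mono) (auto intro: order.trans)

lemma emp_cdf_nonneg: "0 \<le> emp_cdf m Xm A x"
  unfolding emp_cdf_def by simp

lemma emp_cdf_le_1: "emp_cdf m Xm A x \<le> 1"
proof -
  have "card {i \<in> {1..m}. \<forall>k\<in>A. Xm i k \<le> x k} \<le> card {1..m}"
    by (rule card_mono) auto
  then show ?thesis
    unfolding emp_cdf_def by (cases "m = 0") (auto simp: divide_le_eq_1)
qed

lemma emp_cdf_eq_sum:
  "emp_cdf m Xm A x = (\<Sum>i\<in>{1..m}. if \<forall>k\<in>A. Xm i k \<le> x k then 1 else 0) / real m"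
  unfolding emp_cdf_def by (simp add: sum.If_cases Int_def)

lemma floor_ceiling_grid_bracket:
  fixes t :: real
  assumes "0 \<le> t" "t \<le> 1" "0 < K"
  defines "lo \<equiv> nat \<lfloor>real K * t\<rfloor>" and "hi \<equiv> nat \<lceil>real K * t\<rceil>"
  shows "lo \<in> {0..K}" "hi \<in> {0..K}" "real lo / real K \<le> t" "t \<le> real hi / real K"
    "real hi / real K - real lo / real K \<le> 1 / real K"
proof -
  have Kt: "0 \<le> real K * t" "real K * t \<le> real K"
    using assms by (auto simp: mult_left_le)
  then have lo: "real lo = of_int \<lfloor>real K * t\<rfloor>" and hi: "real hi = of_int \<lceil>real K * t\<rceil>"
    unfolding lo_def hi_def by simp_all
  show "lo \<in> {0..K}" "hi \<in> {0..K}"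
    using Kt unfolding lo_def hi_def by (auto simp: nat_le_iff floor_le_iff ceiling_le_iff)
  show "real lo / real K \<le> t" "t \<le> real hi / real K"
    using \<open>0 < K\<close> by (simp_all add: lo hi divide_le_eq le_divide_eq mult.commute)
  have "real hi - real lo \<le> 1"
    unfolding lo hi by (metis ceiling_diff_floor_le_1 of_int_1 of_int_diff of_int_le_iff)
  then show "real hi / real K - real lo / real K \<le> 1 / real K"
    by (simp add: diff_divide_distrib[symmetric] divide_right_mono)
qed

lemma grid_bracket:
  assumes x: "x \<in> PiE A (\<lambda>_. {0..1})" and K: "0 < K"
  obtains lo hi where "lo \<in> grid K A" "hi \<in> grid K A"
    "\<And>k. k \<in> A \<Longrightarrow> lo k \<le> x k \<and> x k \<le> hi k \<and> hi k - lo k \<le> 1 / real K"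
proof -
  have "0 \<le> x k" "x k \<le> 1" if "k \<in> A" for k
    using x that by (auto simp: PiE_def Pi_def)
  note bracket = floor_ceiling_grid_bracket[OF this K]
  define lo where "lo = (\<lambda>k\<in>A. real (nat \<lfloor>real K * x k\<rfloor>) / real K)"
  define hi where "hi = (\<lambda>k\<in>A. real (nat \<lceil>real K * x k\<rceil>) / real K)"
  have "lo \<in> grid K A" "hi \<in> grid K A"
    unfolding grid_def lo_def hi_def using bracket(1,2) by auto
  moreover have "\<And>k. k \<in> A \<Longrightarrow> lo k \<le> x k \<and> x k \<le> hi k \<and> hi k - lo k \<le> 1 / real K"
    unfolding lo_def hi_def using bracket(3-5) by simp
  ultimately show ?thesis by (rule that)
qed

lemma disc_le_grid_disc:
  assumes A: "finite A" and K: "0 < K"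
  shows "disc m Xm A \<le> grid_disc m Xm A K + real (card A) / real K"
  unfolding disc_eq_SUP_emp_cdf
proof (rule cSUP_least)
  show "PiE A (\<lambda>_. {0..1::real}) \<noteq> {}" by (simp add: PiE_eq_empty_iff)
  fix x :: "nat \<Rightarrow> real" assume x: "x \<in> PiE A (\<lambda>_. {0..1})"
  obtain lo hi where grid_pts: "lo \<in> grid K A" "hi \<in> grid K A"
    and bracket: "\<And>k. k \<in> A \<Longrightarrow> lo k \<le> x k \<and> x k \<le> hi k \<and> hi k - lo k \<le> 1 / real K"
    using grid_bracket[OF x K] by blast
  have on_grid: "\<bar>emp_cdf m Xm A g - (\<Prod>k\<in>A. g k)\<bar> \<le> grid_disc m Xm A K" if "g \<in> grid K A" for g
    unfolding grid_disc_def using that finite_grid[OF A] by (intro Max_ge) auto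
  have unit: "0 \<le> lo k" "hi k \<le> 1" if "k \<in> A" for k
    using grid_pts that grid_subset_cube by (auto simp: PiE_def Pi_def)
  have "emp_cdf m Xm A lo \<le> emp_cdf m Xm A x" "emp_cdf m Xm A x \<le> emp_cdf m Xm A hi"
    using bracket by (auto intro!: emp_cdf_mono)
  moreover have "(\<Prod>k\<in>A. lo k) \<le> (\<Prod>k\<in>A. x k)" "(\<Prod>k\<in>A. x k) \<le> (\<Prod>k\<in>A. hi k)"
    using bracket unit by (auto intro!: prod_mono intro: order.trans)
  moreover have "\<bar>(\<Prod>k\<in>A. hi k) - (\<Prod>k\<in>A. lo k)\<bar> \<le> real (card A) / real K"
  proof -
    have "\<bar>hi k\<bar> \<le> 1" "\<bar>lo k\<bar> \<le> 1" if "k \<in> A" for k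
      using bracket[OF that] unit[OF that] by auto
    then have "\<bar>(\<Prod>k\<in>A. hi k) - (\<Prod>k\<in>A. lo k)\<bar> \<le> (\<Sum>k\<in>A. \<bar>hi k - lo k\<bar>)"
      using norm_prod_diff[of A hi lo] by simp
    also have "\<dots> \<le> (\<Sum>k\<in>A. 1 / real K)"
      using bracket by (intro sum_mono) (fastforce simp: abs_le_iff)
    finally show ?thesis by simp
  qed
  ultimately show "\<bar>emp_cdf m Xm A x - (\<Prod>k\<in>A. x k)\<bar> \<le> grid_disc m Xm A K + real (card A) / real K"
    using on_grid[OF grid_pts(1)] on_grid[OF grid_pts(2)] by (simp add: abs_le_iff)
qed

lemma grid_disc_le_disc:
  assumes A: "finite A"
  shows "grid_disc m Xm A K \<le> disc m Xm A"
proof -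
  have "\<bar>emp_cdf m Xm A x - (\<Prod>k\<in>A. x k)\<bar> \<le> 1" if "x \<in> PiE A (\<lambda>_. {0..1})" for x
  proof -
    have "0 \<le> (\<Prod>k\<in>A. x k)" "(\<Prod>k\<in>A. x k) \<le> 1"
      using that by (auto intro!: prod_nonneg prod_le_1 simp: PiE_def Pi_def)
    then show ?thesis using emp_cdf_nonneg[of m Xm A x] emp_cdf_le_1[of m Xm A x] by (simp add: abs_le_iff)
  qed
  then have bdd: "bdd_above ((\<lambda>x. \<bar>emp_cdf m Xm A x - (\<Prod>k\<in>A. x k)\<bar>) ` PiE A (\<lambda>_. {0..1}))"
    by (intro bdd_aboveI2)
  have "\<bar>emp_cdf m Xm A g - (\<Prod>k\<in>A. g k)\<bar> \<le> disc m Xm A" if "g \<in> grid K A" for g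
    unfolding disc_eq_SUP_emp_cdf using that grid_subset_cube by (intro cSUP_upper[OF _ bdd]) blast
  then show ?thesis
    unfolding grid_disc_def using finite_grid[OF A] grid_nonempty by (intro Max.boundedI) auto
qed

lemma disc_exceeds_grid_deviation:
  assumes "finite A" "0 < K" "real (card A) / real K \<le> s / 2" "s < disc m Xm A"
  obtains g where "g \<in> grid K A" "s / 2 < \<bar>emp_cdf m Xm A g - (\<Prod>k\<in>A. g k)\<bar>"
proof -
  have "s / 2 < grid_disc m Xm A K"
    using disc_le_grid_disc[OF assms(1,2), of m Xm] assms(3,4) by linarith
  then show ?thesis
    unfolding grid_disc_def using that finite_grid[OF assms(1)] grid_nonempty
    by (subst (asm) Max_gr_iff) auto
qed

lemma borel_measurable_emp_cdf:
  assumes "finite A" and "\<And>i k. i \<in> {1..m} \<Longrightarrow> k \<in> A \<Longrightarrow> (\<lambda>\<omega>. Xw \<omega> i k) \<in> borel_measurable N"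
  shows "(\<lambda>\<omega>. emp_cdf m (Xw \<omega>) A x) \<in> borel_measurable N"
  unfolding emp_cdf_eq_sum using assms
  by (intro borel_measurable_divide borel_measurable_const borel_measurable_sum measurable_If
      predE pred_intros_finite(3)) (auto simp: pred_def borel_measurable_le)

lemma borel_measurable_disc:
  assumes A: "finite A" and X: "\<And>i k. i \<in> {1..m} \<Longrightarrow> k \<in> A \<Longrightarrow> (\<lambda>\<omega>. Xw \<omega> i k) \<in> borel_measurable N"
  shows "(\<lambda>\<omega>. disc m (Xw \<omega>) A) \<in> borel_measurable N"
proof (rule borel_measurable_LIMSEQ_real)
  show "(\<lambda>\<omega>. grid_disc m (Xw \<omega>) A (Suc K)) \<in> borel_measurable N" for K
    unfolding grid_disc_def
    by (intro borel_measurable_Max finite_grid A borel_measurable_abs borel_measurable_diff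
        borel_measurable_emp_cdf X borel_measurable_const)
  fix \<omega>
  have "(\<lambda>K. real (card A) / real (Suc K)) \<longlonglongrightarrow> 0"
    using LIMSEQ_Suc[OF lim_const_over_n[of "real (card A)"]] by simp
  then have "(\<lambda>K. disc m (Xw \<omega>) A - real (card A) / real (Suc K)) \<longlonglongrightarrow> disc m (Xw \<omega>) A"
    using tendsto_diff[OF tendsto_const] by fastforce
  then show "(\<lambda>K. grid_disc m (Xw \<omega>) A (Suc K)) \<longlonglongrightarrow> disc m (Xw \<omega>) A"
    by (rule tendsto_sandwich[rotated 2, OF _ tendsto_const])
      (use disc_le_grid_disc[OF A, of "Suc _" m "Xw \<omega>"] grid_disc_le_disc[OF A] in
        \<open>auto simp: algebra_simps\<close>)
qed

lemma measure_le_eq_of_uniform_distr: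
  assumes f: "f \<in> borel_measurable M"
    and distr: "distr M lborel f = uniform_measure lborel {0..<1}" and c: "0 \<le> c" "c \<le> (1::real)"
  shows "measure M {\<omega> \<in> space M. f \<omega> \<le> c} = c"
proof -
  have "measure M {\<omega> \<in> space M. f \<omega> \<le> c} = measure (distr M lborel f) {..c}"
    using f by (subst measure_distr) (auto simp: vimage_def Int_def conj_commute)
  also have "\<dots> = measure lborel ({0..<1} \<inter> {..c}) / measure lborel {0..<1::real}"
    unfolding distr by (rule measure_uniform_measure) auto
  also have "\<dots> = c"
  proof (cases "c < 1")
    case True
    then have "{0..<1} \<inter> {..c} = {0..c}" by auto
    then show ?thesis using c by simp
  next
    case False
    then have "{0..<1} \<inter> {..c} = {0..<1::real}" by auto
    then show ?thesis using c False by simp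
  qed
  finally show ?thesis .
qed

context prob_space
begin

lemma prob_row_below_eq_prod:
  fixes Xw :: "'a \<Rightarrow> 'i \<Rightarrow> 'j \<Rightarrow> real"
  assumes ind: "indep_vars (\<lambda>_. borel) (\<lambda>(i, j) \<omega>. Xw \<omega> i j) (I \<times> J)"
    and unif: "\<And>i j. i \<in> I \<Longrightarrow> j \<in> J \<Longrightarrow> distr M lborel (\<lambda>\<omega>. Xw \<omega> i j) = uniform_measure lborel {0..<1}"
    and i: "i \<in> I" and A: "A \<subseteq> J" "finite A" and g: "\<And>k. k \<in> A \<Longrightarrow> 0 \<le> g k \<and> g k \<le> 1"
  shows "prob {\<omega> \<in> space M. \<forall>k\<in>A. Xw \<omega> i k \<le> g k} = (\<Prod>k\<in>A. g k)"
proof (cases "A = {}")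
  case True
  then show ?thesis by (simp add: prob_space)
next
  case False
  let ?X = "\<lambda>(i, j) \<omega>. Xw \<omega> i j" and ?below = "\<lambda>(i, k). {..g k}"
  have "prob (\<Inter>ik\<in>{i} \<times> A. ?X ik -` ?below ik \<inter> space M)
      = (\<Prod>ik\<in>{i} \<times> A. prob (?X ik -` ?below ik \<inter> space M))"
    by (rule indep_varsD[OF ind]) (use False A i in auto)
  also have "(\<Inter>ik\<in>{i} \<times> A. ?X ik -` ?below ik \<inter> space M) = {\<omega> \<in> space M. \<forall>k\<in>A. Xw \<omega> i k \<le> g k}"
    using False by auto
  also have "(\<Prod>ik\<in>{i} \<times> A. prob (?X ik -` ?below ik \<inter> space M))
      = (\<Prod>k\<in>A. prob {\<omega> \<in> space M. Xw \<omega> i k \<le> g k})"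
  proof -
    have "{i} \<times> A = Pair i ` A" by auto
    then show ?thesis
      by (simp add: prod.reindex inj_on_def) (intro prod.cong refl arg_cong[where f=prob]; auto)
  qed
  also have "\<dots> = (\<Prod>k\<in>A. g k)"
  proof (intro prod.cong refl measure_le_eq_of_uniform_distr[OF _ unif])
    fix k assume "k \<in> A"
    then show "(\<lambda>\<omega>. Xw \<omega> i k) \<in> borel_measurable M"
      using indep_vars_def[THEN iffD1, OF ind] i A by auto
  qed (use i A g in auto)
  finally show ?thesis .
qed

lemma indep_vars_row_indicators:
  fixes Xw :: "'a \<Rightarrow> 'i \<Rightarrow> 'j \<Rightarrow> real"
  assumes ind: "indep_vars (\<lambda>_. borel) (\<lambda>(i, j) \<omega>. Xw \<omega> i j) (I \<times> J)"
    and A: "A \<subseteq> J" "finite A"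
  shows "indep_vars (\<lambda>_. borel) (\<lambda>i \<omega>. if \<forall>k\<in>A. Xw \<omega> i k \<le> g k then 1 else 0 :: real) I"
proof -
  define row_ind where
    "row_ind i z = (if \<forall>k\<in>A. z (i, k) \<le> g k then 1 else 0 :: real)" for i and z :: "'i \<times> 'j \<Rightarrow> real"
  have rows: "indep_vars (\<lambda>i. PiM ({i} \<times> A) (\<lambda>_. borel))
      (\<lambda>i \<omega>. restrict (\<lambda>ij. (\<lambda>(i, j) \<omega>. Xw \<omega> i j) ij \<omega>) ({i} \<times> A)) I"
    by (rule indep_vars_restrict[OF ind]) (use A in \<open>auto simp: disjoint_family_on_def\<close>)
  have "row_ind i \<in> borel_measurable (PiM ({i} \<times> A) (\<lambda>_. borel))" for i
    unfolding row_ind_def using A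
    by (intro measurable_If measurable_const predE pred_intros_finite(3))
      (auto simp: pred_def intro!: borel_measurable_le measurable_component_singleton)
  from indep_vars_compose2[OF rows this] show ?thesis
    by (simp add: row_ind_def)
qed

lemma emp_cdf_deviation_prob_le:
  fixes Xw :: "'a \<Rightarrow> nat \<Rightarrow> nat \<Rightarrow> real"
  assumes ind: "indep_vars (\<lambda>_. borel) (\<lambda>(i, j) \<omega>. Xw \<omega> i j) ({1..m} \<times> J)"
    and unif: "\<And>i j. i \<in> {1..m} \<Longrightarrow> j \<in> J \<Longrightarrow> distr M lborel (\<lambda>\<omega>. Xw \<omega> i j) = uniform_measure lborel {0..<1}"
    and A: "A \<subseteq> J" "finite A" and g: "\<And>k. k \<in> A \<Longrightarrow> 0 \<le> g k \<and> g k \<le> 1"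
    and m: "0 < m" and t: "0 \<le> t"
  shows "prob {\<omega> \<in> space M. t < \<bar>emp_cdf m (Xw \<omega>) A g - (\<Prod>k\<in>A. g k)\<bar>} \<le> 2 * exp (-2 * real m * t\<^sup>2)"
proof -
  define Y where "Y i \<omega> = (if \<forall>k\<in>A. Xw \<omega> i k \<le> g k then 1 else 0 :: real)" for i \<omega>
  have indY: "indep_vars (\<lambda>_. borel) Y {1..m}"
    unfolding Y_def by (rule indep_vars_row_indicators[OF ind A])
  have EY: "expectation (Y i) = (\<Prod>k\<in>A. g k)" if i: "i \<in> {1..m}" for i
  proof -
    have "expectation (Y i) = expectation (indicator {\<omega> \<in> space M. \<forall>k\<in>A. Xw \<omega> i k \<le> g k})"
      by (intro Bochner_Integration.integral_cong) (auto simp: Y_def indicator_def)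
    then show ?thesis using prob_row_below_eq_prod[OF ind unif i A g] by (simp add: Int_absorb2)
  qed
  interpret Hoeffding_ineq M "{1..m}" Y "\<lambda>_. 0" "\<lambda>_. 1" "real m * (\<Prod>k\<in>A. g k)"
    by unfold_locales (use indY EY in \<open>auto simp: Y_def\<close>)
  have deviation_scaled: "\<bar>(\<Sum>i\<in>{1..m}. Y i \<omega>) - real m * (\<Prod>k\<in>A. g k)\<bar>
      = real m * \<bar>emp_cdf m (Xw \<omega>) A g - (\<Prod>k\<in>A. g k)\<bar>" for \<omega>
  proof -
    have "\<bar>a - real m * b\<bar> = real m * \<bar>a / real m - b\<bar>" for a b :: real
    proof -
      have "a - real m * b = real m * (a / real m - b)" using m by (simp add: field_simps)
      then show ?thesis by (simp add: abs_mult)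
    qed
    then show ?thesis unfolding emp_cdf_eq_sum Y_def .
  qed
  have "{\<omega> \<in> space M. t < \<bar>emp_cdf m (Xw \<omega>) A g - (\<Prod>k\<in>A. g k)\<bar>}
      \<subseteq> {\<omega> \<in> space M. \<bar>(\<Sum>i\<in>{1..m}. Y i \<omega>) - real m * (\<Prod>k\<in>A. g k)\<bar> \<ge> real m * t}"
    unfolding deviation_scaled by (auto intro: mult_left_mono)
  then have "prob {\<omega> \<in> space M. t < \<bar>emp_cdf m (Xw \<omega>) A g - (\<Prod>k\<in>A. g k)\<bar>}
      \<le> prob {\<omega> \<in> space M. \<bar>(\<Sum>i\<in>{1..m}. Y i \<omega>) - real m * (\<Prod>k\<in>A. g k)\<bar> \<ge> real m * t}"
    using indY unfolding indep_vars_def by (intro finite_measure_mono) measurable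
  also have "\<dots> \<le> 2 * exp (-2 * (real m * t)\<^sup>2 / (\<Sum>i\<in>{1..m}. (1 - 0)\<^sup>2))"
    by (rule Hoeffding_ineq_abs_ge) (use t m in auto)
  also have "-2 * (real m * t)\<^sup>2 / (\<Sum>i\<in>{1..m}. (1 - 0)\<^sup>2) = -2 * real m * t\<^sup>2"
    using m by (simp add: power2_eq_square)
  finally show ?thesis .
qed

lemma prob_disc_exceeds_le:
  fixes Xw :: "'a \<Rightarrow> nat \<Rightarrow> nat \<Rightarrow> real"
  assumes ind: "indep_vars (\<lambda>_. borel) (\<lambda>(i, j) \<omega>. Xw \<omega> i j) ({1..m} \<times> J)"
    and unif: "\<And>i j. i \<in> {1..m} \<Longrightarrow> j \<in> J \<Longrightarrow> distr M lborel (\<lambda>\<omega>. Xw \<omega> i j) = uniform_measure lborel {0..<1}"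
    and m: "0 < m" and s: "0 < s"
    and S: "finite S" "\<And>A. A \<in> S \<Longrightarrow> A \<subseteq> J \<and> finite A \<and> card A \<le> D"
    and K: "0 < K" "real D / real K \<le> s / 2"
  shows "prob {\<omega> \<in> space M. \<exists>A\<in>S. s < disc m (Xw \<omega>) A}
      \<le> real (card S) * real (K + 1) ^ D * (2 * exp (-2 * real m * (s / 2)\<^sup>2))"
proof -
  define b where "b = 2 * exp (-2 * real m * (s / 2)\<^sup>2)"
  define E where "E A g = {\<omega> \<in> space M. s / 2 < \<bar>emp_cdf m (Xw \<omega>) A g - (\<Prod>k\<in>A. g k)\<bar>}" for A g
  have X_meas: "(\<lambda>\<omega>. Xw \<omega> i j) \<in> borel_measurable M" if "i \<in> {1..m}" "j \<in> J" for i j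
    using indep_vars_def[THEN iffD1, OF ind] that by auto
  have E_events: "E A g \<in> events" if "A \<in> S" for A g
    unfolding E_def using S(2)[OF that]
    by (intro borel_measurable_less borel_measurable_const borel_measurable_abs borel_measurable_diff
        borel_measurable_emp_cdf X_meas) auto
  have E_union_events: "(\<Union>g\<in>grid K A. E A g) \<in> events" if "A \<in> S" for A
    using E_events[OF that] finite_grid S(2)[OF that] by auto
  have E_prob: "prob (E A g) \<le> b" if "A \<in> S" "g \<in> grid K A" for A g
    unfolding E_def b_def using S(2)[OF that(1)] that(2) grid_subset_cube s
    by (intro emp_cdf_deviation_prob_le[OF ind unif _ _ _ m]) (auto simp: PiE_def Pi_def)
  have "{\<omega> \<in> space M. \<exists>A\<in>S. s < disc m (Xw \<omega>) A} \<subseteq> (\<Union>A\<in>S. \<Union>g\<in>grid K A. E A g)"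
  proof safe
    fix \<omega> A assume \<omega>: "\<omega> \<in> space M" and A: "A \<in> S" and exceeds: "s < disc m (Xw \<omega>) A"
    have "card A / real K \<le> s / 2"
      using S(2)[OF A] K by (meson divide_right_mono of_nat_0_le_iff of_nat_le_iff order.trans)
    then obtain g where "g \<in> grid K A" "s / 2 < \<bar>emp_cdf m (Xw \<omega>) A g - (\<Prod>k\<in>A. g k)\<bar>"
      using disc_exceeds_grid_deviation S(2)[OF A] K(1) exceeds by blast
    then show "\<omega> \<in> (\<Union>A\<in>S. \<Union>g\<in>grid K A. E A g)" using A \<omega> unfolding E_def by blast
  qed
  then have "prob {\<omega> \<in> space M. \<exists>A\<in>S. s < disc m (Xw \<omega>) A} \<le> prob (\<Union>A\<in>S. \<Union>g\<in>grid K A. E A g)"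
    using E_union_events S by (intro finite_measure_mono) auto
  also have "\<dots> \<le> (\<Sum>A\<in>S. \<Sum>g\<in>grid K A. prob (E A g))"
    using E_events E_union_events S finite_grid
    by (intro order.trans[OF finite_measure_subadditive_finite] sum_mono finite_measure_subadditive_finite) auto
  also have "\<dots> \<le> (\<Sum>A\<in>S. real (card (grid K A)) * b)"
    using E_prob by (intro sum_mono) (simp add: sum_bounded_above)
  also have "\<dots> \<le> (\<Sum>A\<in>S. real (K + 1) ^ D * b)"
  proof (intro sum_mono mult_right_mono)
    fix A assume "A \<in> S"
    then have "card (grid K A) \<le> (K + 1) ^ D"
      using S(2) by (intro order.trans[OF card_grid_le power_increasing]) auto
    then show "real (card (grid K A)) \<le> real (K + 1) ^ D"
      by (metis of_nat_le_iff of_nat_power)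
  qed (simp add: b_def)
  finally show ?thesis by (simp add: b_def)
qed

lemma prob_disc_all_le_ge:
  fixes Xw :: "'a \<Rightarrow> nat \<Rightarrow> nat \<Rightarrow> real"
  assumes ind: "indep_vars (\<lambda>_. borel) (\<lambda>(i, j) \<omega>. Xw \<omega> i j) ({1..m} \<times> J)"
    and unif: "\<And>i j. i \<in> {1..m} \<Longrightarrow> j \<in> J \<Longrightarrow> distr M lborel (\<lambda>\<omega>. Xw \<omega> i j) = uniform_measure lborel {0..<1}"
    and m: "0 < m" and s: "0 < s"
    and S: "finite S" "\<And>A. A \<in> S \<Longrightarrow> A \<subseteq> J \<and> finite A \<and> card A \<le> D"
    and K: "0 < K" "real D / real K \<le> s / 2"
  shows "1 - real (card S) * real (K + 1) ^ D * (2 * exp (-2 * real m * (s / 2)\<^sup>2))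
      \<le> prob {\<omega> \<in> space M. \<forall>A\<in>S. disc m (Xw \<omega>) A \<le> s}"
proof -
  have "(\<lambda>\<omega>. disc m (Xw \<omega>) A) \<in> borel_measurable M" if "A \<in> S" for A
    using S(2)[OF that] indep_vars_def[THEN iffD1, OF ind] by (intro borel_measurable_disc) auto
  then have "{\<omega> \<in> space M. \<exists>A\<in>S. s < disc m (Xw \<omega>) A} \<in> events"
    using S(1) by measurable
  then have "prob {\<omega> \<in> space M. \<forall>A\<in>S. disc m (Xw \<omega>) A \<le> s}
      = 1 - prob {\<omega> \<in> space M. \<exists>A\<in>S. s < disc m (Xw \<omega>) A}"
    by (subst prob_compl[symmetric]) (auto simp: not_less intro!: arg_cong[where f=prob])
  then show ?thesis
    using prob_disc_exceeds_le[OF ind unif m s S K] by linarith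
qed

end

lemma card_subsets_card_le:
  assumes "finite X" "1 \<le> card X"
  shows "card {A. A \<subseteq> X \<and> card A \<le> D} \<le> (D + 1) * card X ^ D"
proof -
  have "{A. A \<subseteq> X \<and> card A \<le> D} = (\<Union>d\<le>D. {A. A \<subseteq> X \<and> card A = d})" by auto
  then have "card {A. A \<subseteq> X \<and> card A \<le> D} \<le> (\<Sum>d\<le>D. card {A. A \<subseteq> X \<and> card A = d})"
    by (simp add: card_UN_le)
  also have "\<dots> = (\<Sum>d\<le>D. card X choose d)"
    using assms(1) by (simp add: n_subsets)
  also have "\<dots> \<le> (\<Sum>d\<le>D. card X ^ D)"
  proof (intro sum_mono)
    fix d assume "d \<in> {..D}"
    then have "card X choose d \<le> card X ^ d"
      by (cases "d \<le> card X") (auto simp: binomial_le_pow binomial_eq_0)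
    also have "\<dots> \<le> card X ^ D" using \<open>d \<in> {..D}\<close> assms(2) by (intro power_increasing) auto
    finally show "card X choose d \<le> card X ^ D" .
  qed
  finally show ?thesis by simp
qed

lemma max_over_le_iff:
  fixes h :: "'i \<Rightarrow> real"
  shows "finite U \<Longrightarrow> 0 \<le> s \<Longrightarrow> max_over U h \<le> s \<longleftrightarrow> (\<forall>A\<in>U. h A \<le> s)"
  unfolding max_over_def by (auto simp: Max_le_iff)

lemma design_subsets_small:
  assumes "1 \<le> p0" "p0 \<le> M" "p0 \<le> P"
  shows "insert {1..p0} (U2 P \<union> U3 P p0 \<union> U4 P p0 M) \<subseteq> {A. A \<subseteq> {1..P} \<and> card A \<le> p0 + M}"
proof -
  have "card ({1..p0} \<union> I) \<le> p0 + M" if "card I \<le> M" for I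
    using card_Un_le[of "{1..p0}" I] that by simp
  then show ?thesis
    using assms unfolding U2_def U3_def U4_def by auto
qed

lemma grid_resolution:
  assumes "0 < s" "0 < D"
  shows "0 < nat \<lceil>2 * real D / s\<rceil>" "real D / real (nat \<lceil>2 * real D / s\<rceil>) \<le> s / 2"
proof -
  have le: "2 * real D / s \<le> real (nat \<lceil>2 * real D / s\<rceil>)" by linarith
  moreover have "0 < 2 * real D / s" using assms by simp
  ultimately show pos: "0 < nat \<lceil>2 * real D / s\<rceil>" by linarith
  have "2 * real D \<le> real (nat \<lceil>2 * real D / s\<rceil>) * s"
    using le by (simp only: pos_divide_le_eq[OF assms(1)])
  then show "real D / real (nat \<lceil>2 * real D / s\<rceil>) \<le> s / 2"
    using pos by (simp add: divide_le_eq mult.commute)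
qed

lemma prob_design_discs_le_ge:
  fixes \<Omega> :: "'a measure" and Xw :: "'a \<Rightarrow> nat \<Rightarrow> nat \<Rightarrow> real"
  assumes "prob_space \<Omega>"
    and ind: "prob_space.indep_vars \<Omega> (\<lambda>_. borel) (\<lambda>(i, j) \<omega>. Xw \<omega> i j) ({1..n} \<times> {1..P})"
    and unif: "\<And>i j. i \<in> {1..n} \<Longrightarrow> j \<in> {1..P} \<Longrightarrow>
                 distr \<Omega> lborel (\<lambda>\<omega>. Xw \<omega> i j) = uniform_measure lborel {0..<1}"
    and p0: "1 \<le> p0" "p0 \<le> M" "p0 \<le> P" and n: "0 < n" and s: "0 < s"
  defines "D \<equiv> p0 + M"
  shows "1 - real (D + 1) * real P ^ D * real (nat \<lceil>2 * real D / s\<rceil> + 1) ^ D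
             * (2 * exp (-2 * real n * (s / 2)\<^sup>2))
         \<le> measure \<Omega> {\<omega> \<in> space \<Omega>. disc n (Xw \<omega>) {1..p0} \<le> s
              \<and> max_over (U2 P) (disc n (Xw \<omega>)) \<le> s
              \<and> max_over (U3 P p0) (disc n (Xw \<omega>)) \<le> s
              \<and> max_over (U4 P p0 M) (disc n (Xw \<omega>)) \<le> s}"
proof -
  interpret prob_space \<Omega> by fact
  define S where "S = insert {1..p0} (U2 P \<union> U3 P p0 \<union> U4 P p0 M)"
  have S_small: "S \<subseteq> {A. A \<subseteq> {1..P} \<and> card A \<le> D}"
    unfolding S_def D_def by (rule design_subsets_small[OF p0])
  then have "finite S"
    by (rule finite_subset) (auto intro: finite_subset[of _ "Pow {1..P}"])
  then have fin: "finite S" "finite (U2 P)" "finite (U3 P p0)" "finite (U4 P p0 M)"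
    unfolding S_def by auto
  define b where "b = real (nat \<lceil>2 * real D / s\<rceil> + 1) ^ D * (2 * exp (-2 * real n * (s / 2)\<^sup>2))"
  have "card S \<le> (D + 1) * P ^ D"
    using card_mono[OF _ S_small] card_subsets_card_le[of "{1..P}" D] p0 by fastforce
  then have "real (card S) \<le> real (D + 1) * real P ^ D"
    by (metis of_nat_le_iff of_nat_mult of_nat_power)
  then have "real (card S) * b \<le> real (D + 1) * real P ^ D * b"
    unfolding b_def by (rule mult_right_mono) simp
  moreover have "1 - real (card S) * real (nat \<lceil>2 * real D / s\<rceil> + 1) ^ D * (2 * exp (-2 * real n * (s / 2)\<^sup>2))
      \<le> prob {\<omega> \<in> space \<Omega>. \<forall>A\<in>S. disc n (Xw \<omega>) A \<le> s}"
    using S_small p0 s unif unfolding D_def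
    by (intro prob_disc_all_le_ge[OF ind _ n s fin(1)] grid_resolution) (auto intro: finite_subset)
  moreover have "{\<omega> \<in> space \<Omega>. \<forall>A\<in>S. disc n (Xw \<omega>) A \<le> s}
      = {\<omega> \<in> space \<Omega>. disc n (Xw \<omega>) {1..p0} \<le> s
              \<and> max_over (U2 P) (disc n (Xw \<omega>)) \<le> s
              \<and> max_over (U3 P p0) (disc n (Xw \<omega>)) \<le> s
              \<and> max_over (U4 P p0 M) (disc n (Xw \<omega>)) \<le> s}"
    using s fin by (auto simp: S_def max_over_le_iff)
  ultimately show ?thesis
    unfolding b_def by (simp only: mult.assoc)
qed

lemma power_le_exp_of_ln_le:
  fixes x y :: real
  assumes "1 \<le> x" "ln x \<le> y"
  shows "x ^ D \<le> exp (real D * y)"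
proof -
  have "x ^ D = exp (real D * ln x)"
    using assms(1) by (simp add: exp_of_nat_mult)
  then show ?thesis
    using assms(2) by (simp add: mult_left_mono)
qed

lemma nat_ceiling_add_one_le:
  fixes a x :: real
  assumes "0 \<le> a" "1 \<le> x"
  shows "real (nat \<lceil>a * x\<rceil> + 1) \<le> (a + 2) * x"
proof -
  have "real (nat \<lceil>a * x\<rceil>) = of_int \<lceil>a * x\<rceil>" using assms by simp
  then have "real (nat \<lceil>a * x\<rceil>) \<le> a * x + 1" using ceiling_correct[of "a * x"] by linarith
  then show ?thesis using assms(2) by (simp add: algebra_simps)
qed

lemma design_union_bound_tendsto_0:
  fixes P :: "nat \<Rightarrow> nat" and D :: nat and c \<gamma>0 \<gamma>10 :: real
  assumes \<gamma>: "0 < \<gamma>0" "0 < \<gamma>10" "\<gamma>10 < 1 - 2 * \<gamma>0"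
    and P: "\<And>n. 1 \<le> P n" and log_P: "\<forall>\<^sub>F n in sequentially. ln (real (P n)) \<le> c * real n powr \<gamma>10"
  shows "(\<lambda>n. real (D + 1) * real (P n) ^ D * real (nat \<lceil>2 * real D / real n powr - \<gamma>0\<rceil> + 1) ^ D
             * (2 * exp (-2 * real n * (real n powr - \<gamma>0 / 2)\<^sup>2))) \<longlonglongrightarrow> 0"
    (is "?B \<longlonglongrightarrow> 0")
proof -
  define R where "R x = 2 * real (D + 1) * (2 * real D + 2) ^ D * (x powr \<gamma>0) ^ D
      * exp (real D * c * x powr \<gamma>10 - x powr (1 - 2 * \<gamma>0) / 2)" for x :: real
  have "(R \<longlongrightarrow> 0) at_top"
    unfolding R_def using \<gamma> by real_asymp
  then have R_lim: "(\<lambda>n. R (real n)) \<longlonglongrightarrow> 0"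
    by (rule filterlim_compose) (rule filterlim_real_sequentially)
  have "\<forall>\<^sub>F n in sequentially. ?B n \<le> R (real n)"
    using log_P eventually_ge_at_top[of 1]
  proof eventually_elim
    case (elim n)
    have P_pow: "real (P n) ^ D \<le> exp (real D * c * real n powr \<gamma>10)"
      using power_le_exp_of_ln_le[OF _ elim(1)] P[of n] by (simp add: mult.assoc)
    have "1 \<le> real n powr \<gamma>0" using elim(2) \<gamma>(1) by (simp add: ge_one_powr_ge_zero)
    then have "real (nat \<lceil>2 * real D * real n powr \<gamma>0\<rceil> + 1) \<le> (2 * real D + 2) * real n powr \<gamma>0"
      by (rule nat_ceiling_add_one_le[rotated]) simp
    then have K_pow: "real (nat \<lceil>2 * real D / real n powr - \<gamma>0\<rceil> + 1) ^ D \<le> ((2 * real D + 2) * real n powr \<gamma>0) ^ D"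
      by (simp only: powr_minus divide_inverse inverse_inverse_eq) (rule power_mono[OF _ of_nat_0_le_iff])
    have exponent: "-2 * real n * (real n powr - \<gamma>0 / 2)\<^sup>2 = - (real n powr (1 - 2 * \<gamma>0)) / 2"
      using elim(2) by (simp add: power2_eq_square powr_add[symmetric] powr_diff powr_minus field_simps)
    have "?B n \<le> real (D + 1) * exp (real D * c * real n powr \<gamma>10)
        * ((2 * real D + 2) * real n powr \<gamma>0) ^ D * (2 * exp (- (real n powr (1 - 2 * \<gamma>0)) / 2))"
      unfolding exponent
    proof (rule mult_right_mono)
      show "real (D + 1) * real (P n) ^ D * real (nat \<lceil>2 * real D / real n powr - \<gamma>0\<rceil> + 1) ^ D
          \<le> real (D + 1) * exp (real D * c * real n powr \<gamma>10) * ((2 * real D + 2) * real n powr \<gamma>0) ^ D"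
        by (intro mult_mono mult_left_mono P_pow K_pow zero_le_power[OF of_nat_0_le_iff]) simp_all
    qed simp
    also have "\<dots> = R (real n)"
    proof -
      have "exp (real D * c * real n powr \<gamma>10 - real n powr (1 - 2 * \<gamma>0) / 2)
          = exp (real D * c * real n powr \<gamma>10) * exp (- (real n powr (1 - 2 * \<gamma>0)) / 2)"
        by (simp add: exp_add[symmetric])
      then show ?thesis unfolding R_def by (simp only: mult_ac power_mult_distrib)
    qed
    finally show ?case .
  qed
  moreover have "\<forall>\<^sub>F n in sequentially. 0 \<le> ?B n"
    by (intro always_eventually allI mult_nonneg_nonneg zero_le_power of_nat_0_le_iff exp_ge_zero zero_le_numeral)
  ultimately show ?thesis
    by (intro tendsto_sandwich[OF _ _ tendsto_const R_lim])
qed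

theorem lemma9:
  fixes \<Omega> :: "nat \<Rightarrow> 'a measure"
    and X :: "nat \<Rightarrow> 'a \<Rightarrow> nat \<Rightarrow> nat \<Rightarrow> real"
    and p :: "nat \<Rightarrow> nat" and p0 M :: nat
    and f ft :: "nat \<Rightarrow> (nat \<Rightarrow> real) \<Rightarrow> real"
    and \<eta> :: "nat \<Rightarrow> real"
    and \<gamma>1 \<gamma>2 \<gamma>3 \<gamma>4 \<gamma>5 \<gamma>6 \<gamma>7 \<gamma>10 \<gamma>0 :: real
  assumes setting: "1 \<le> p0" "p0 \<le> M" "\<forall>n. p0 < p n"
    and f_cont: "\<forall>n. continuous_on (cube (p n)) (f n)"
    and ft_cont: "\<forall>n. continuous_on (cube p0) (ft n)"
    and eta_pos: "\<forall>n. \<eta> n > 0"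
    and A5_prob: "\<forall>n. prob_space (\<Omega> n)"
    and A5_indep: "\<forall>n. prob_space.indep_vars (\<Omega> n) (\<lambda>_. borel)
                        (\<lambda>(i, j) \<omega>. X n \<omega> i j) ({1..n} \<times> {1..p n})"
    and A5_unif: "\<forall>n i j. i \<in> {1..n} \<longrightarrow> j \<in> {1..p n} \<longrightarrow>
                    distr (\<Omega> n) lborel (\<lambda>\<omega>. X n \<omega> i j) = uniform_measure lborel {0..<1}"
    and A6: "bigO_pow \<eta> (- \<gamma>1)"
      "bigO_pow_e (\<lambda>n. V1 (p n) p0 (f n) (ft n)) \<gamma>2"
      "bigO_pow_e (\<lambda>n. V2 (p n) p0 M (f n) (ft n)) \<gamma>3"
      "bigO_pow_e (\<lambda>n. C1 (p n) p0 (ft n)) \<gamma>4"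
      "bigO_pow (\<lambda>n. C2 (p n) (f n)) \<gamma>5"
      "bigO_pow (\<lambda>n. C3 (p n) p0 (f n) (ft n)) \<gamma>6"
      "bigO_pow (\<lambda>n. C4 (p n) p0 M (f n) (ft n)) \<gamma>7"
      "bigO_pow (\<lambda>n. ln (real (p n))) \<gamma>10"
    and A6_gam: "\<gamma>1 > 0" "\<gamma>10 > 0" "\<gamma>10 < 1"
      "\<gamma>2 < (1 - \<gamma>10) / 2" "\<gamma>3 < (1 - \<gamma>10) / 2" "\<gamma>4 < (1 - \<gamma>10) / 2" "\<gamma>5 < (1 - \<gamma>10) / 2"
      "\<gamma>6 < \<gamma>1" "\<gamma>7 < \<gamma>1"
      "\<gamma>4 + \<gamma>6 < (1 - \<gamma>10) / 2" "\<gamma>5 + \<gamma>6 < (1 - \<gamma>10) / 2"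
      "\<gamma>4 + \<gamma>7 < (1 - \<gamma>10) / 2" "\<gamma>5 + \<gamma>7 < (1 - \<gamma>10) / 2"
    and gam0: "0 < \<gamma>0" "\<gamma>0 < (1 - \<gamma>10) / 2"
  shows "(\<lambda>n. measure (\<Omega> n) {\<omega> \<in> space (\<Omega> n).
            disc n (X n \<omega>) {1..p0} \<le> real n powr (- \<gamma>0)
          \<and> max_over (U2 (p n)) (disc n (X n \<omega>)) \<le> real n powr (- \<gamma>0)
          \<and> max_over (U3 (p n) p0) (disc n (X n \<omega>)) \<le> real n powr (- \<gamma>0)
          \<and> max_over (U4 (p n) p0 M) (disc n (X n \<omega>)) \<le> real n powr (- \<gamma>0)})
         \<longlonglongrightarrow> 1"
proof -
  let ?s = "\<lambda>n. real n powr - \<gamma>0"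
  let ?E = "\<lambda>n. {\<omega> \<in> space (\<Omega> n). disc n (X n \<omega>) {1..p0} \<le> ?s n
          \<and> max_over (U2 (p n)) (disc n (X n \<omega>)) \<le> ?s n
          \<and> max_over (U3 (p n) p0) (disc n (X n \<omega>)) \<le> ?s n
          \<and> max_over (U4 (p n) p0 M) (disc n (X n \<omega>)) \<le> ?s n}"
  define B where "B n = real (p0 + M + 1) * real (p n) ^ (p0 + M)
      * real (nat \<lceil>2 * real (p0 + M) / ?s n\<rceil> + 1) ^ (p0 + M) * (2 * exp (-2 * real n * (?s n / 2)\<^sup>2))"
    for n
  obtain c where "\<forall>\<^sub>F n in sequentially. \<bar>ln (real (p n))\<bar> \<le> c * real n powr \<gamma>10"
    using A6(8) unfolding bigO_pow_def by blast
  then have log_p: "\<forall>\<^sub>F n in sequentially. ln (real (p n)) \<le> c * real n powr \<gamma>10"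
    by (rule eventually_mono) simp
  have p_ge_1: "1 \<le> p n" for n
    using setting(1) setting(3)[rule_format, of n] by linarith
  have "B \<longlonglongrightarrow> 0"
    unfolding B_def using gam0(2) by (intro design_union_bound_tendsto_0[OF gam0(1) A6_gam(2) _ p_ge_1 log_p]) simp
  then have lower_lim: "(\<lambda>n. 1 - B n) \<longlonglongrightarrow> 1"
    using tendsto_diff[OF tendsto_const, of B 0 sequentially 1] by simp
  have "1 - B n \<le> measure (\<Omega> n) (?E n)" if "0 < n" for n
    unfolding B_def
    by (rule prob_design_discs_le_ge[OF A5_prob[rule_format] A5_indep[rule_format] A5_unif[rule_format]
          setting(1,2) less_imp_le[OF setting(3)[rule_format]] that]) (use that in simp_all)
  then have "\<forall>\<^sub>F n in sequentially. 1 - B n \<le> measure (\<Omega> n) (?E n)"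
    by (rule eventually_mono[OF eventually_gt_at_top[of 0]])
  moreover have "\<forall>\<^sub>F n in sequentially. measure (\<Omega> n) (?E n) \<le> 1"
    by (intro always_eventually allI prob_space.prob_le_1 A5_prob[rule_format])
  ultimately show ?thesis
    by (rule tendsto_sandwich[OF _ _ lower_lim tendsto_const])
qed

end
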